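(* Let $V=\bigcup_{k\ge0}\{1,2\}^k$ be the binary tree and let $(U^v)_{v\in V}$ be i.i.d. random variables uniformly distributed on $[0,1]$. Then there exists a family $(Y^v)_{v\in V}$ of random variables with values in $D=D[0,1]$, all having the same distribution, such that for every $v\in V$, almost surely, simultaneously for all $t\in[0,1]$, $$Y^v(t)=\mathbf 1_{t<U^v}\,U^v\,Y^{v1}\!\Big(\frac{t}{U^v}\Big)+\mathbf 1_{t\ge U^v}\Big(U^vY^{v1}(1)+(1-U^v)\,Y^{v2}\Big(\frac{t-U^v}{1-U^v}\Big)\Big)+C(t,U^v).$$
   Context: $V=\bigcup_{k\ge0}\{1,2\}^k$ is the rooted binary tree of finite words over $\{1,2\}$ (root the empty word $\emptyset$, $vi$ denotes the word $v$ followed by the letter $i$). $D=D[0,1]$ is the space of càdlàg functions $[0,1]\to\mathbb R$ (right continuous with left limits), with its Borel $\sigma$-field for the Skorokhod topology. The cost functions are $C(x)=1+2x\ln x+2(1-x)\ln(1-x)$ for $x\in[0,1]$ (with $0\ln0=0$) and, for $t,x\in[0,1]$, $C(t,x)=C(x)+2\,\mathbf 1_{t<x}\big(-1+x+(1-t)\ln(1-t)-(1-x)\ln(1-x)-(x-t)\ln(x-t)\big)$. *)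

theory Defs
  imports "HOL-Probability.Probability"
begin

text \<open>Letters of the binary tree alphabet; a vertex v is a word (list of letters),
  vi is written v @ [i].\<close>
datatype letter = One | Two

definition cadlag :: "(real \<Rightarrow> real) \<Rightarrow> bool" where
  "cadlag f \<longleftrightarrow>
     (\<forall>t\<in>{0..<1}. continuous (at_right t) f) \<and>
     (\<forall>t\<in>{0<..1}. \<exists>l. (f \<longlongrightarrow> l) (at_left t)) \<and>
     (\<forall>t. t \<notin> {0..1} \<longrightarrow> f t = 0)"

definition D_set :: "(real \<Rightarrow> real) set" where
  "D_set = {f. cadlag f}"

text \<open>The space D with its Borel sigma-field for the Skorokhod topology, which is
  the trace of the cylinder (coordinate-projection) sigma-field.\<close>
definition D_meas :: "(real \<Rightarrow> real) measure" where
  "D_meas = restrict_space (Pi\<^sub>M UNIV (\<lambda>_. borel)) D_set"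

definition Cx :: "real \<Rightarrow> real" where
  "Cx x = 1 + 2 * x * ln x + 2 * (1 - x) * ln (1 - x)"

definition Ctx :: "real \<Rightarrow> real \<Rightarrow> real" where
  "Ctx t x = Cx x + 2 * (if t < x then 1 else 0) *
     (-1 + x + (1 - t) * ln (1 - t) - (1 - x) * ln (1 - x) - (x - t) * ln (x - t))"

end

(*
  The fixed point is built pathwise from the labels x w = U^w. A node w owns an interval of length
  l_w, the product of the labels (left steps) and their complements (right steps) along w, and
  incurs the cost l_w C(x w). The total cost Q is the sum of these costs level by level, and Y(t)
  is the sum, over the nodes on the path towards t, of l_w C(t', x w) (t' the rescaled position)
  plus the total cost of the subtree lying entirely to the left of t; the fixed-point equation is
  the first step of this series.

  Both series converge almost surely because E C(U) = 0: the cross terms of the level costs then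
  have mean zero, so the second moment of level j is at most 9 (2/3)^j, and likewise the sum of
  the squared lengths over level k has mean (2/3)^k. Hence energies weighted by (6/5)^j are
  integrable, thus finite a.s., and Cauchy-Schwarz against the weights (5/6)^j turns a finite
  energy into absolute convergence, uniformly in t. Uniform convergence makes the paths cadlag,
  and since every shifted label family has the same product law, all Y^v have the same law.
*)

theory Submission
  imports Defs "HOL-Real_Asymp.Real_Asymp"
begin

section \<open>Labellings of the binary tree\<close>

instance letter :: countable by countable_datatype

type_synonym labels = "letter list \<Rightarrow> real"

definition shift :: "letter list \<Rightarrow> labels \<Rightarrow> labels" where
  "shift v x = (\<lambda>w. x (v @ w))"

definition clamp01 :: "real \<Rightarrow> real" where
  "clamp01 u = max 0 (min 1 u)"

text \<open>Clamping makes \<open>root x\<close> a length in \<open>[0, 1]\<close> for every labelling, so that the deterministic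
  estimates below need no hypotheses; on the labellings that matter it is the identity.\<close>

definition root :: "labels \<Rightarrow> real" where
  "root x = clamp01 (x [])"

lemma shift_apply: "shift v x w = x (v @ w)"
  by (simp add: shift_def)

lemma shift_shift [simp]: "shift w (shift v x) = shift (v @ w) x"
  by (simp add: shift_def)

lemma shift_Nil [simp]: "shift [] x = x"
  by (simp add: shift_def)

lemma clamp01_id: "u \<in> {0..1} \<Longrightarrow> clamp01 u = u"
  by (auto simp: clamp01_def)

lemma clamp01_bounds [simp]: "0 \<le> clamp01 u" "clamp01 u \<le> 1"
  by (auto simp: clamp01_def)

lemma root_bounds [simp]: "0 \<le> root x" "root x \<le> 1"
  by (simp_all add: root_def)

abbreviation label_space :: "labels measure" where
  "label_space \<equiv> Pi\<^sub>M UNIV (\<lambda>_. borel)"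

lemma measurable_shift [measurable]: "shift v \<in> measurable label_space label_space"
  unfolding shift_def by (rule measurable_PiM_single') (auto simp: space_PiM)

lemma measurable_clamp01 [measurable]: "clamp01 \<in> borel_measurable borel"
  unfolding clamp01_def by measurable

lemma measurable_root [measurable]: "root \<in> borel_measurable label_space"
  unfolding root_def by measurable

lemma xlnx_bounds:
  fixes y :: real
  assumes "0 \<le> y" "y \<le> 1"
  shows "-1 \<le> y * ln y" "y * ln y \<le> 0"
proof -
  show "y * ln y \<le> 0"
    using assms by (cases "y = 0") (auto simp: mult_nonneg_nonpos)
  show "-1 \<le> y * ln y"
  proof (cases "y = 0")
    case False
    with assms have "0 < y" by simp
    have "- ln y \<le> 1 / y - 1"
      using ln_le_minus_one[of "1 / y"] \<open>0 < y\<close> by (simp add: ln_div)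
    then have "y * (- ln y) \<le> y * (1 / y - 1)"
      using \<open>0 < y\<close> by (intro mult_left_mono) auto
    also have "\<dots> = 1 - y"
      using \<open>0 < y\<close> by (simp add: field_simps)
    finally show ?thesis
      using \<open>0 < y\<close> by simp
  qed simp
qed

lemma continuous_on_xlnx: "continuous_on {0..} (\<lambda>y::real. y * ln y)"
proof (rule continuous_on_eq_continuous_within[THEN iffD2], intro ballI)
  fix y :: real
  assume "y \<in> {0..}"
  show "continuous (at y within {0..}) (\<lambda>y. y * ln y)"
  proof (cases "y = 0")
    case True
    have "((\<lambda>y::real. y * ln y) \<longlongrightarrow> 0) (at_right 0)"
      by real_asymp
    with True show ?thesis
      by (simp add: continuous_within at_within_Ici_at_right)
  next
    case False
    with \<open>y \<in> {0..}\<close> have "isCont (\<lambda>y. y * ln y) y"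
      by (intro continuous_intros) auto
    then show ?thesis
      by (rule continuous_at_imp_continuous_at_within)
  qed
qed

lemma has_integral_reflect01:
  fixes f :: "real \<Rightarrow> real"
  assumes "(f has_integral I) {0..1}"
  shows "((\<lambda>u. f (1 - u)) has_integral I) {0..1}"
proof -
  have "((\<lambda>u. f ((-1) *\<^sub>R u + 1)) has_integral (1 / \<bar>-1\<bar> ^ DIM(real)) *\<^sub>R I)
      ((\<lambda>u. (1 / -1) *\<^sub>R u + - ((1 / -1) *\<^sub>R 1)) ` cbox 0 1)"
    using assms by (intro has_integral_affinity) auto
  moreover have "(\<lambda>u::real. (1 / -1) *\<^sub>R u + - ((1 / -1) *\<^sub>R 1)) ` cbox 0 1 = {0..1}"
    by (auto simp: image_iff intro: bexI[where x = "1 - _"])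
  ultimately show ?thesis
    by simp
qed

lemma has_integral_square01: "((\<lambda>u::real. u ^ 2) has_integral 1 / 3) {0..1}"
proof -
  have "((\<lambda>u::real. u ^ 2) has_integral 1 ^ 3 / 3 - 0 ^ 3 / 3) {0..1}"
    by (rule fundamental_theorem_of_calculus)
       (auto intro!: derivative_eq_intros simp: has_real_derivative_iff_has_vector_derivative[symmetric])
  then show ?thesis
    by simp
qed

lemma has_integral_neg_xlnx01: "((\<lambda>u::real. - (u * ln u)) has_integral 1 / 4) {0..1}"
proof -
  define G where "G u = u ^ 2 / 4 - u * (u * ln u) / 2" for u :: real
  have "((\<lambda>u::real. - (u * ln u)) has_integral G 1 - G 0) {0..1}"
  proof (rule fundamental_theorem_of_calculus_interior)
    show "continuous_on {0..1} G"
      unfolding G_def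
      by (intro continuous_intros continuous_on_subset[OF continuous_on_xlnx]) auto
    fix u :: real
    assume "u \<in> {0<..<1}"
    then show "(G has_vector_derivative - (u * ln u)) (at u)"
      unfolding G_def has_real_derivative_iff_has_vector_derivative[symmetric]
      by (auto intro!: derivative_eq_intros simp: field_simps power2_eq_square)
  qed simp
  then show ?thesis
    by (simp add: G_def)
qed

lemma sum_abs_sq_le_weighted:
  fixes a :: "nat \<Rightarrow> real" and w :: real
  assumes w: "1 < w"
  shows "(\<Sum>j<n. \<bar>a j\<bar>) ^ 2 \<le> w / (w - 1) * (\<Sum>j<n. w ^ j * a j ^ 2)"
proof -
  have "(\<Sum>j<n. \<bar>a j\<bar>) ^ 2 = (\<Sum>j<n. (1 / sqrt w) ^ j * (sqrt w ^ j * \<bar>a j\<bar>)) ^ 2"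
    using w by (simp add: power_one_over)
  also have "\<dots> \<le> (\<Sum>j<n. ((1 / sqrt w) ^ j) ^ 2) * (\<Sum>j<n. (sqrt w ^ j * \<bar>a j\<bar>) ^ 2)"
    by (rule Cauchy_Schwarz_ineq_sum)
  also have "\<dots> = (\<Sum>j<n. (1 / w) ^ j) * (\<Sum>j<n. w ^ j * a j ^ 2)"
  proof -
    have "(sqrt w ^ j) ^ 2 = w ^ j" for j
      using w by (simp flip: power_mult add: mult.commute[of j] power_mult)
    then show ?thesis
      by (simp add: power_mult_distrib power_divide)
  qed
  also have "\<dots> \<le> w / (w - 1) * (\<Sum>j<n. w ^ j * a j ^ 2)"
  proof (rule mult_right_mono)
    have "norm (1 / w) < 1"
      using w by simp
    have "(\<Sum>j<n. (1 / w) ^ j) \<le> (\<Sum>j. (1 / w) ^ j)"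
      by (rule sum_le_suminf[OF summable_geometric[OF \<open>norm (1 / w) < 1\<close>]]) (use w in auto)
    also have "\<dots> = w / (w - 1)"
      using suminf_geometric[OF \<open>norm (1 / w) < 1\<close>] w by (simp add: field_simps)
    finally show "(\<Sum>j<n. (1 / w) ^ j) \<le> w / (w - 1)" .
  qed (use w in \<open>auto intro: sum_nonneg\<close>)
  finally show ?thesis .
qed

lemma summable_abs_of_weighted_squares:
  fixes a :: "nat \<Rightarrow> real" and w :: real
  assumes w: "1 < w" and sum: "summable (\<lambda>j. w ^ j * a j ^ 2)"
  shows "summable (\<lambda>j. \<bar>a j\<bar>)"
    and "(\<Sum>j. \<bar>a j\<bar>) ^ 2 \<le> w / (w - 1) * (\<Sum>j. w ^ j * a j ^ 2)"
proof -
  define B where "B = w / (w - 1) * (\<Sum>j. w ^ j * a j ^ 2)"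
  have partial: "(\<Sum>j<n. \<bar>a j\<bar>) \<le> sqrt B" for n
  proof (rule real_le_rsqrt)
    have "(\<Sum>j<n. \<bar>a j\<bar>) ^ 2 \<le> w / (w - 1) * (\<Sum>j<n. w ^ j * a j ^ 2)"
      by (rule sum_abs_sq_le_weighted[OF w])
    also have "\<dots> \<le> B"
      unfolding B_def using w by (intro mult_left_mono sum_le_suminf[OF sum]) auto
    finally show "(\<Sum>j<n. \<bar>a j\<bar>) ^ 2 \<le> B" .
  qed
  show summable: "summable (\<lambda>j. \<bar>a j\<bar>)"
    by (rule summableI_nonneg_bounded[OF _ partial]) simp
  have "(\<Sum>j. \<bar>a j\<bar>) \<le> sqrt B"
    by (rule suminf_le_const[OF summable partial])
  then have "(\<Sum>j. \<bar>a j\<bar>) ^ 2 \<le> sqrt B ^ 2"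
    by (intro power_mono) (auto intro: suminf_nonneg[OF summable])
  also have "sqrt B ^ 2 = B"
    using w sum by (simp add: B_def suminf_nonneg)
  finally show "(\<Sum>j. \<bar>a j\<bar>) ^ 2 \<le> w / (w - 1) * (\<Sum>j. w ^ j * a j ^ 2)"
    by (simp add: B_def)
qed

lemma suminf_ennreal_geometric:
  fixes c q :: real
  assumes "0 \<le> c" "0 \<le> q" "q < 1"
  shows "(\<Sum>j. ennreal (c * q ^ j)) = ennreal (c / (1 - q))"
proof -
  have "(\<lambda>j. c * q ^ j) sums (c * (1 / (1 - q)))"
    using assms by (intro sums_mult geometric_sums) auto
  then show ?thesis
    using assms by (subst suminf_ennreal2) (auto simp: sums_iff)
qed

lemma abs_mult_unit_le:
  fixes a b :: real
  assumes "0 \<le> a" "a \<le> 1" "\<bar>b\<bar> \<le> B"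
  shows "\<bar>a * b\<bar> \<le> B"
  using assms mult_left_le_one_le[of "\<bar>b\<bar>" a] by (simp add: abs_mult)

lemma eventually_at_left_less: "\<forall>\<^sub>F s in at_left (t::real). s < t"
  by (auto simp: eventually_at_filter)

lemma tendsto_rescale_at_right:
  fixes f :: "real \<Rightarrow> real"
  assumes "(f \<longlongrightarrow> l) (at_right ((t - b) / c))" "0 < c"
  shows "((\<lambda>s. a * f ((s - b) / c)) \<longlongrightarrow> a * l) (at_right t)"
proof -
  have "filterlim (\<lambda>s. (s - b) / c) (at_right ((t - b) / c)) (at_right t)"
  proof (rule tendsto_imp_filterlim_at_right)
    show "((\<lambda>s. (s - b) / c) \<longlongrightarrow> (t - b) / c) (at_right t)"
      by (intro tendsto_intros) (use assms in auto)
    show "\<forall>\<^sub>F s in at_right t. (t - b) / c < (s - b) / c"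
      using eventually_at_right_less[of t]
      by eventually_elim (use assms in \<open>auto simp: divide_strict_right_mono\<close>)
  qed
  then show ?thesis
    by (intro tendsto_mult tendsto_const filterlim_compose[OF assms(1)])
qed

lemma tendsto_rescale_at_left:
  fixes f :: "real \<Rightarrow> real"
  assumes "(f \<longlongrightarrow> l) (at_left ((t - b) / c))" "0 < c"
  shows "((\<lambda>s. a * f ((s - b) / c)) \<longlongrightarrow> a * l) (at_left t)"
proof -
  have "filterlim (\<lambda>s. (s - b) / c) (at_left ((t - b) / c)) (at_left t)"
  proof (rule tendsto_imp_filterlim_at_left)
    show "((\<lambda>s. (s - b) / c) \<longlongrightarrow> (t - b) / c) (at_left t)"
      by (intro tendsto_intros) (use assms in auto)
    show "\<forall>\<^sub>F s in at_left t. (s - b) / c < (t - b) / c"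
      using eventually_at_left_less[of t]
      by eventually_elim (use assms in \<open>auto simp: divide_strict_right_mono\<close>)
  qed
  then show ?thesis
    by (intro tendsto_mult tendsto_const filterlim_compose[OF assms(1)])
qed

lemma abs_Cx_le:
  assumes "0 \<le> u" "u \<le> 1"
  shows "\<bar>Cx u\<bar> \<le> 3"
proof -
  have "-1 \<le> u * ln u" "u * ln u \<le> 0" "-1 \<le> (1 - u) * ln (1 - u)" "(1 - u) * ln (1 - u) \<le> 0"
    using xlnx_bounds[of u] xlnx_bounds[of "1 - u"] assms by auto
  then show ?thesis
    unfolding Cx_def by (simp only: abs_le_iff mult.assoc) linarith
qed

lemma abs_Ctx_le:
  assumes "0 \<le> t" "t \<le> 1" "0 \<le> u" "u \<le> 1"
  shows "\<bar>Ctx t u\<bar> \<le> 8"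
  using abs_Cx_le[of u] xlnx_bounds[of "1 - t"] xlnx_bounds[of "1 - u"] xlnx_bounds[of "u - t"] assms
  by (auto simp: Ctx_def abs_le_iff)

lemma measurable_Cx [measurable]: "Cx \<in> borel_measurable borel"
  unfolding Cx_def by measurable

lemma measurable_Ctx [measurable]: "(\<lambda>(t, u). Ctx t u) \<in> borel_measurable (borel \<Otimes>\<^sub>M borel)"
  unfolding Ctx_def by measurable

definition Ctx_below :: "real \<Rightarrow> real \<Rightarrow> real" where
  "Ctx_below u s =
     Cx u + 2 * (-1 + u + (1 - s) * ln (1 - s) - (1 - u) * ln (1 - u) - (u - s) * ln (u - s))"

lemma Ctx_eq_Ctx_below: "Ctx s u = (if s < u then Ctx_below u s else Cx u)"
  by (simp add: Ctx_def Ctx_below_def)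

lemma continuous_on_Ctx_below:
  assumes "u \<le> 1"
  shows "continuous_on {..u} (Ctx_below u)"
proof -
  have left: "continuous_on {..u} (\<lambda>s. (1 - s) * ln (1 - s))"
    by (rule continuous_on_compose2[OF continuous_on_xlnx]) (use assms in \<open>auto intro!: continuous_intros\<close>)
  have right: "continuous_on {..u} (\<lambda>s. (u - s) * ln (u - s))"
    by (rule continuous_on_compose2[OF continuous_on_xlnx]) (auto intro!: continuous_intros)
  show ?thesis
    unfolding Ctx_below_def
    by (intro left right continuous_on_add continuous_on_diff continuous_on_mult continuous_on_const)
qed

section \<open>Level costs and the total cost\<close>

text \<open>\<open>level_cost j x\<close> is the sum of \<open>l\<^sub>w C(x w)\<close> over the nodes \<open>w\<close> of depth \<open>j\<close>.\<close>

primrec level_cost :: "nat \<Rightarrow> labels \<Rightarrow> real" where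
  "level_cost 0 x = Cx (root x)"
| "level_cost (Suc j) x =
     root x * level_cost j (shift [One] x) + (1 - root x) * level_cost j (shift [Two] x)"

definition total_cost :: "labels \<Rightarrow> real" where
  "total_cost x = (\<Sum>j. level_cost j x)"

text \<open>Any weight strictly between 1 and 3/2 would do: the second moments decay like \<open>(2/3)\<^sup>j\<close>.\<close>

definition cost_energy :: "labels \<Rightarrow> ennreal" where
  "cost_energy x = (\<Sum>j. ennreal ((6/5) ^ j * level_cost j x ^ 2))"

lemma abs_level_cost_le: "\<bar>level_cost j x\<bar> \<le> 3"
proof (induction j arbitrary: x)
  case 0
  show ?case
    using abs_Cx_le[of "root x"] by simp
next
  case (Suc j)
  have "\<bar>level_cost (Suc j) x\<bar>
      \<le> \<bar>root x * level_cost j (shift [One] x)\<bar> + \<bar>(1 - root x) * level_cost j (shift [Two] x)\<bar>"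
    by (simp add: abs_triangle_ineq)
  also have "\<dots> = root x * \<bar>level_cost j (shift [One] x)\<bar> + (1 - root x) * \<bar>level_cost j (shift [Two] x)\<bar>"
    by (simp add: abs_mult)
  also have "\<dots> \<le> root x * 3 + (1 - root x) * 3"
    by (intro add_mono mult_left_mono Suc) auto
  finally show ?case
    by simp
qed

lemma level_cost_sq_le: "level_cost j x ^ 2 \<le> 9"
  using power_mono[OF abs_level_cost_le[of j x], of 2] by simp

lemma measurable_level_cost [measurable]: "level_cost j \<in> borel_measurable label_space"
  by (induction j) auto

lemma measurable_total_cost [measurable]: "total_cost \<in> borel_measurable label_space"
  unfolding total_cost_def by measurable

lemma measurable_cost_energy [measurable]: "cost_energy \<in> borel_measurable label_space"
  unfolding cost_energy_def by measurable

lemma summable_weighted_level_cost: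
  assumes "cost_energy x < \<infinity>"
  shows "summable (\<lambda>j. (6/5) ^ j * level_cost j x ^ 2)"
    and "cost_energy x = ennreal (\<Sum>j. (6/5) ^ j * level_cost j x ^ 2)"
proof -
  show summable: "summable (\<lambda>j. (6/5) ^ j * level_cost j x ^ 2)"
    using assms by (intro summable_suminf_not_top) (auto simp: cost_energy_def)
  show "cost_energy x = ennreal (\<Sum>j. (6/5) ^ j * level_cost j x ^ 2)"
    unfolding cost_energy_def by (rule suminf_ennreal2[OF _ summable]) simp
qed

lemma summable_level_cost:
  assumes "cost_energy x < \<infinity>"
  shows "summable (\<lambda>j. level_cost j x)"
  using summable_abs_of_weighted_squares(1)[OF _ summable_weighted_level_cost(1)[OF assms]]
  by (auto intro: summable_rabs_cancel)

lemma total_cost_sq_le: "ennreal (total_cost x ^ 2) \<le> 6 * cost_energy x"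
proof (cases "cost_energy x < \<infinity>")
  case True
  note summable = summable_weighted_level_cost[OF True]
  have abs_summable: "summable (\<lambda>j. \<bar>level_cost j x\<bar>)"
    by (rule summable_abs_of_weighted_squares(1)[OF _ summable(1)]) simp
  have "total_cost x ^ 2 \<le> (\<Sum>j. \<bar>level_cost j x\<bar>) ^ 2"
    unfolding total_cost_def abs_le_square_iff[symmetric]
    using summable_rabs[OF abs_summable] by (simp add: suminf_nonneg[OF abs_summable])
  also have "\<dots> \<le> 6 * (\<Sum>j. (6/5) ^ j * level_cost j x ^ 2)"
    using summable_abs_of_weighted_squares(2)[OF _ summable(1)] by simp
  finally have "ennreal (total_cost x ^ 2) \<le> ennreal (6 * (\<Sum>j. (6/5) ^ j * level_cost j x ^ 2))"
    by (rule ennreal_leI)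
  then show ?thesis
    unfolding summable(2) by (simp add: ennreal_mult')
qed (simp add: less_top[symmetric] ennreal_mult_top)

lemma total_cost_recursion:
  assumes "summable (\<lambda>j. level_cost j (shift [One] x))" "summable (\<lambda>j. level_cost j (shift [Two] x))"
  shows "total_cost x =
    root x * total_cost (shift [One] x) + (1 - root x) * total_cost (shift [Two] x) + Cx (root x)"
proof -
  have tail: "(\<lambda>j. level_cost (Suc j) x) sums
      (root x * total_cost (shift [One] x) + (1 - root x) * total_cost (shift [Two] x))"
    unfolding level_cost.simps total_cost_def
    by (intro sums_add sums_mult summable_sums assms)
  have "(\<lambda>j. level_cost j x) sums
      (root x * total_cost (shift [One] x) + (1 - root x) * total_cost (shift [Two] x) + level_cost 0 x)"
    using sums_Suc[OF tail] .
  then show ?thesis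
    unfolding total_cost_def by (simp add: sums_iff)
qed

section \<open>Path terms\<close>

text \<open>\<open>path_term k x t\<close> is the contribution of the depth-\<open>k\<close> node on the path towards \<open>t\<close>:
  its partial cost \<open>C(t, \<cdot>)\<close> at the rescaled position, plus the total cost of its left subtree
  once \<open>t\<close> has passed the split point.\<close>

primrec path_term :: "nat \<Rightarrow> labels \<Rightarrow> real \<Rightarrow> real" where
  "path_term 0 x t = Ctx t (root x) + (if root x \<le> t then root x * total_cost (shift [One] x) else 0)"
| "path_term (Suc k) x t =
     (if t < root x then root x * path_term k (shift [One] x) (t / root x)
      else (1 - root x) * path_term k (shift [Two] x) ((t - root x) / (1 - root x)))"

text \<open>\<open>sq_length_sum k h x\<close> is the sum of \<open>l\<^sub>w\<^sup>2 h (shift w x)\<close> over the nodes \<open>w\<close> of depth \<open>k\<close>.\<close>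

primrec sq_length_sum :: "nat \<Rightarrow> (labels \<Rightarrow> ennreal) \<Rightarrow> labels \<Rightarrow> ennreal" where
  "sq_length_sum 0 h x = h x"
| "sq_length_sum (Suc k) h x =
     ennreal (root x ^ 2) * sq_length_sum k h (shift [One] x)
     + ennreal ((1 - root x) ^ 2) * sq_length_sum k h (shift [Two] x)"

definition root_term_bound :: "labels \<Rightarrow> ennreal" where
  "root_term_bound x = ennreal ((8 + \<bar>total_cost (shift [One] x)\<bar>) ^ 2)"

definition path_energy :: "labels \<Rightarrow> ennreal" where
  "path_energy x = (\<Sum>k. ennreal ((6/5) ^ k) * sq_length_sum k root_term_bound x)"

lemma measurable_sq_length_sum:
  assumes [measurable]: "h \<in> borel_measurable label_space"
  shows "sq_length_sum k h \<in> borel_measurable label_space"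
  by (induction k) auto

lemma measurable_root_term_bound [measurable]: "root_term_bound \<in> borel_measurable label_space"
  unfolding root_term_bound_def by measurable

lemmas measurable_sq_length_sum_root_term_bound [measurable] =
  measurable_sq_length_sum[OF measurable_root_term_bound]

lemma measurable_path_energy [measurable]: "path_energy \<in> borel_measurable label_space"
  unfolding path_energy_def by measurable

lemma root_term_bound_le: "root_term_bound x \<le> 128 + 12 * cost_energy (shift [One] x)"
proof -
  define q where "q = total_cost (shift [One] x)"
  have "(8 + \<bar>q\<bar>) ^ 2 \<le> 128 + 2 * q ^ 2"
    using sum_squares_bound[of 8 "\<bar>q\<bar>"] by (simp add: power2_eq_square algebra_simps)
  then have "root_term_bound x \<le> ennreal (128 + 2 * q ^ 2)"
    unfolding root_term_bound_def q_def[symmetric] by (rule ennreal_leI)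
  also have "\<dots> = 128 + 2 * ennreal (q ^ 2)"
    by (simp add: ennreal_mult')
  also have "\<dots> \<le> 128 + 2 * (6 * cost_energy (shift [One] x))"
    using total_cost_sq_le by (intro add_mono mult_left_mono) (auto simp: q_def)
  finally show ?thesis
    by (simp add: mult.assoc[symmetric])
qed

lemma path_term_sq_le:
  assumes "0 \<le> t" "t \<le> 1"
  shows "ennreal (path_term k x t ^ 2) \<le> sq_length_sum k root_term_bound x"
  using assms
proof (induction k arbitrary: x t)
  case 0
  have "\<bar>path_term 0 x t\<bar> \<le> \<bar>Ctx t (root x)\<bar> + root x * \<bar>total_cost (shift [One] x)\<bar>"
    using abs_triangle_ineq[of "Ctx t (root x)" "root x * total_cost (shift [One] x)"]
    by (auto simp: abs_mult)
  also have "\<dots> \<le> 8 + \<bar>total_cost (shift [One] x)\<bar>"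
    using 0 by (intro add_mono abs_Ctx_le mult_left_le_one_le) auto
  finally have "path_term 0 x t ^ 2 \<le> (8 + \<bar>total_cost (shift [One] x)\<bar>) ^ 2"
    using power_mono[of "\<bar>path_term 0 x t\<bar>" _ 2] by simp
  then show ?case
    by (simp add: root_term_bound_def ennreal_leI)
next
  case (Suc k)
  define u where "u = root x"
  have u: "0 \<le> u" "u \<le> 1"
    by (simp_all add: u_def)
  show ?case
  proof (cases "t < u")
    case True
    have "ennreal (path_term (Suc k) x t ^ 2)
        = ennreal (u ^ 2) * ennreal (path_term k (shift [One] x) (t / u) ^ 2)"
      using True by (simp add: u_def[symmetric] power_mult_distrib ennreal_mult)
    also have "\<dots> \<le> ennreal (u ^ 2) * sq_length_sum k root_term_bound (shift [One] x)"
      using True Suc.prems by (intro mult_left_mono Suc.IH) auto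
    also have "\<dots> \<le> sq_length_sum (Suc k) root_term_bound x"
      by (simp add: u_def)
    finally show ?thesis .
  next
    case False
    have rescaled: "0 \<le> (t - u) / (1 - u)" "(t - u) / (1 - u) \<le> 1"
      using False Suc.prems u by (cases "u = 1"; auto simp: field_simps)+
    have "ennreal (path_term (Suc k) x t ^ 2)
        = ennreal ((1 - u) ^ 2) * ennreal (path_term k (shift [Two] x) ((t - u) / (1 - u)) ^ 2)"
      using False u by (simp add: u_def[symmetric] power_mult_distrib ennreal_mult)
    also have "\<dots> \<le> ennreal ((1 - u) ^ 2) * sq_length_sum k root_term_bound (shift [Two] x)"
      using rescaled by (intro mult_left_mono Suc.IH) auto
    also have "\<dots> \<le> sq_length_sum (Suc k) root_term_bound x"
      by (simp add: u_def)
    finally show ?thesis .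
  qed
qed

lemma sq_length_sum_finite:
  assumes "path_energy x < \<infinity>"
  shows "sq_length_sum k root_term_bound x < \<infinity>"
proof -
  have "ennreal ((6/5) ^ k) * sq_length_sum k root_term_bound x < \<infinity>"
    using assms ennreal_suminf_lessD by (auto simp: path_energy_def)
  then show ?thesis
    by (auto simp: ennreal_mult_less_top)
qed

lemma abs_path_term_le:
  assumes "path_energy x < \<infinity>" "0 \<le> t" "t \<le> 1"
  shows "\<bar>path_term k x t\<bar> \<le> sqrt (enn2real (sq_length_sum k root_term_bound x))"
proof -
  have "ennreal (path_term k x t ^ 2) \<le> ennreal (enn2real (sq_length_sum k root_term_bound x))"
    using path_term_sq_le[OF assms(2,3)] sq_length_sum_finite[OF assms(1)] by simp
  then have "\<bar>path_term k x t\<bar> ^ 2 \<le> enn2real (sq_length_sum k root_term_bound x)"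
    by (simp add: ennreal_le_iff)
  then show ?thesis
    by (rule real_le_rsqrt)
qed

lemma summable_path_term_bound:
  assumes "path_energy x < \<infinity>"
  shows "summable (\<lambda>k. sqrt (enn2real (sq_length_sum k root_term_bound x)))"
proof -
  define r where "r k = enn2real (sq_length_sum k root_term_bound x)" for k
  have "(\<Sum>k. ennreal ((6/5) ^ k * sqrt (r k) ^ 2)) = path_energy x"
    unfolding path_energy_def r_def using sq_length_sum_finite[OF assms]
    by (intro suminf_cong) (simp add: ennreal_mult)
  then have "summable (\<lambda>k. (6/5) ^ k * sqrt (r k) ^ 2)"
    using assms by (intro summable_suminf_not_top) auto
  from summable_abs_of_weighted_squares(1)[OF _ this] show ?thesis
    by (simp add: r_def)
qed

section \<open>The fixed-point process\<close>

definition qs_process :: "labels \<Rightarrow> real \<Rightarrow> real" where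
  "qs_process x t =
     (if 0 \<le> t \<and> t < 1 then (\<Sum>k. path_term k x t) else if t = 1 then total_cost x else 0)"

definition regular :: "labels \<Rightarrow> bool" where
  "regular x \<longleftrightarrow>
     (\<forall>w. 0 < x w \<and> x w < 1 \<and> cost_energy (shift w x) < \<infinity> \<and> path_energy (shift w x) < \<infinity>)"

lemma regular_shift: "regular x \<Longrightarrow> regular (shift v x)"
  unfolding regular_def by (auto simp: shift_apply)

lemma regular_root:
  assumes "regular x"
  shows "root x = x []" "0 < x []" "x [] < 1"
proof -
  show "0 < x []" "x [] < 1"
    using assms by (simp_all add: regular_def)
  then show "root x = x []"
    by (simp add: root_def clamp01_id)
qed

lemma regular_energies:
  assumes "regular x"
  shows "cost_energy x < \<infinity>" "path_energy x < \<infinity>"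
  using assms unfolding regular_def by (metis shift_Nil)+

lemma summable_path_term:
  assumes "regular x" "0 \<le> t" "t \<le> 1"
  shows "summable (\<lambda>k. path_term k x t)"
proof (rule summable_comparison_test)
  show "summable (\<lambda>k. sqrt (enn2real (sq_length_sum k root_term_bound x)))"
    using summable_path_term_bound[OF regular_energies(2)[OF assms(1)]] .
  show "\<exists>N. \<forall>k\<ge>N. norm (path_term k x t) \<le> sqrt (enn2real (sq_length_sum k root_term_bound x))"
    using abs_path_term_le[OF regular_energies(2)[OF assms(1)] assms(2,3)] by auto
qed

lemma sums_path_term_Suc:
  assumes x: "regular x" and t: "0 \<le> t" "t < 1"
  shows "(\<lambda>k. path_term (Suc k) x t) sums
    (if t < x [] then x [] * qs_process (shift [One] x) (t / x [])
     else (1 - x []) * qs_process (shift [Two] x) ((t - x []) / (1 - x [])))"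
proof -
  define u where "u = x []"
  have u: "root x = u" "0 < u" "u < 1"
    using regular_root[OF x] by (simp_all add: u_def)
  show ?thesis
  proof (cases "t < u")
    case True
    have "0 \<le> t / u" "t / u < 1"
      using True t u by (auto simp: field_simps)
    then show ?thesis
      using True u summable_path_term[OF regular_shift[OF x], of "t / u" "[One]"]
      by (simp add: qs_process_def summable_sums sums_mult u_def[symmetric])
  next
    case False
    have "0 \<le> (t - u) / (1 - u)" "(t - u) / (1 - u) < 1"
      using False t u by (auto simp: field_simps)
    then show ?thesis
      using False u summable_path_term[OF regular_shift[OF x], of "(t - u) / (1 - u)" "[Two]"]
      by (simp add: qs_process_def summable_sums sums_mult u_def[symmetric])
  qed
qed

lemma qs_process_recursion:
  assumes x: "regular x" and t: "0 \<le> t" "t \<le> 1"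
  shows "qs_process x t =
    (if t < x [] then x [] * qs_process (shift [One] x) (t / x [])
     else x [] * qs_process (shift [One] x) 1
          + (1 - x []) * qs_process (shift [Two] x) ((t - x []) / (1 - x [])))
    + Ctx t (x [])"
proof (cases "t = 1")
  case True
  have "summable (\<lambda>j. level_cost j (shift [a] x))" for a
    by (intro summable_level_cost regular_energies regular_shift x)
  then show ?thesis
    using True regular_root[OF x] total_cost_recursion[of x] by (simp add: qs_process_def Ctx_def)
next
  case False
  with t have "t < 1"
    by simp
  from sums_Suc[OF sums_path_term_Suc[OF x t(1) this]] show ?thesis
    using t \<open>t < 1\<close> regular_root[OF x] by (auto simp: qs_process_def sums_iff)
qed

lemma path_term_0_continuous_from_right: "(path_term 0 x \<longlongrightarrow> path_term 0 x t) (at_right t)"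
proof (cases "t < root x")
  case True
  have "isCont (Ctx_below (root x)) t"
    using True by (intro continuous_on_interior[OF continuous_on_Ctx_below]) auto
  then have "(Ctx_below (root x) \<longlongrightarrow> path_term 0 x t) (at_right t)"
    using True by (simp add: isCont_def filterlim_at_split Ctx_eq_Ctx_below)
  moreover have "\<forall>\<^sub>F s in at_right t. Ctx_below (root x) s = path_term 0 x s"
    using order_tendstoD(2)[OF tendsto_ident_at True]
    by eventually_elim (auto simp: Ctx_eq_Ctx_below)
  ultimately show ?thesis
    by (rule tendsto_cong[THEN iffD1, rotated])
next
  case False
  have "\<forall>\<^sub>F s in at_right t. path_term 0 x s = path_term 0 x t"
    using eventually_at_right_less[of t]
    by eventually_elim (use False in \<open>auto simp: Ctx_eq_Ctx_below\<close>)
  then show ?thesis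
    by (rule tendsto_eventually)
qed

lemma path_term_0_left_limit: "\<exists>l. (path_term 0 x \<longlongrightarrow> l) (at_left t)"
proof (cases "t \<le> root x")
  case True
  have "(Ctx_below (root x) \<longlongrightarrow> Ctx_below (root x) t) (at t within {..root x})"
    using continuous_on_Ctx_below[of "root x"] True by (simp add: continuous_on_def)
  then have "(Ctx_below (root x) \<longlongrightarrow> Ctx_below (root x) t) (at_left t)"
    by (rule tendsto_within_subset) (use True in auto)
  moreover have "\<forall>\<^sub>F s in at_left t. Ctx_below (root x) s = path_term 0 x s"
    using eventually_at_left_less[of t]
    by eventually_elim (use True in \<open>auto simp: Ctx_eq_Ctx_below\<close>)
  ultimately have "(path_term 0 x \<longlongrightarrow> Ctx_below (root x) t) (at_left t)"
    by (rule tendsto_cong[THEN iffD1, rotated])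
  then show ?thesis ..
next
  case False
  have "\<forall>\<^sub>F s in at_left t. root x < s"
    using False by (intro order_tendstoD(1)[OF tendsto_ident_at]) auto
  then have "\<forall>\<^sub>F s in at_left t. path_term 0 x s = Cx (root x) + root x * total_cost (shift [One] x)"
    by eventually_elim (auto simp: Ctx_eq_Ctx_below)
  then have "(path_term 0 x \<longlongrightarrow> Cx (root x) + root x * total_cost (shift [One] x)) (at_left t)"
    by (rule tendsto_eventually)
  then show ?thesis ..
qed

lemma path_term_continuous_from_right:
  "0 \<le> t \<Longrightarrow> t < 1 \<Longrightarrow> (path_term k x \<longlongrightarrow> path_term k x t) (at_right t)"
proof (induction k arbitrary: x t)
  case 0
  show ?case
    by (rule path_term_0_continuous_from_right)
next
  case (Suc k)
  define u where "u = root x"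
  have u: "0 \<le> u" "u \<le> 1"
    by (simp_all add: u_def)
  show ?case
  proof (cases "t < u")
    case True
    have "((\<lambda>s. u * path_term k (shift [One] x) ((s - 0) / u))
        \<longlongrightarrow> u * path_term k (shift [One] x) ((t - 0) / u)) (at_right t)"
      using True Suc.prems by (intro tendsto_rescale_at_right Suc.IH) (auto simp: field_simps)
    moreover have "\<forall>\<^sub>F s in at_right t. u * path_term k (shift [One] x) ((s - 0) / u) = path_term (Suc k) x s"
      using order_tendstoD(2)[OF tendsto_ident_at True]
      by eventually_elim (simp add: u_def)
    ultimately show ?thesis
      using True by (auto simp: u_def intro: tendsto_cong[THEN iffD1, rotated])
  next
    case False
    then have "u < 1"
      using Suc.prems by simp
    have "((\<lambda>s. (1 - u) * path_term k (shift [Two] x) ((s - u) / (1 - u)))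
        \<longlongrightarrow> (1 - u) * path_term k (shift [Two] x) ((t - u) / (1 - u))) (at_right t)"
      using False Suc.prems \<open>u < 1\<close> by (intro tendsto_rescale_at_right Suc.IH) (auto simp: field_simps)
    moreover have "\<forall>\<^sub>F s in at_right t.
        (1 - u) * path_term k (shift [Two] x) ((s - u) / (1 - u)) = path_term (Suc k) x s"
      using eventually_at_right_less[of t]
      by eventually_elim (use False in \<open>simp add: u_def\<close>)
    ultimately show ?thesis
      using False by (auto simp: u_def intro: tendsto_cong[THEN iffD1, rotated])
  qed
qed

lemma path_term_left_limit: "0 < t \<Longrightarrow> t \<le> 1 \<Longrightarrow> \<exists>l. (path_term k x \<longlongrightarrow> l) (at_left t)"
proof (induction k arbitrary: x t)
  case 0
  show ?case
    by (rule path_term_0_left_limit)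
next
  case (Suc k)
  define u where "u = root x"
  have u: "0 \<le> u" "u \<le> 1"
    by (simp_all add: u_def)
  show ?case
  proof (cases "t \<le> u")
    case True
    then have "0 < u"
      using Suc.prems by simp
    obtain l where "(path_term k (shift [One] x) \<longlongrightarrow> l) (at_left ((t - 0) / u))"
      using Suc.IH[of "(t - 0) / u" "shift [One] x"] True \<open>0 < u\<close> Suc.prems by auto
    then have "((\<lambda>s. u * path_term k (shift [One] x) ((s - 0) / u)) \<longlongrightarrow> u * l) (at_left t)"
      using \<open>0 < u\<close> by (rule tendsto_rescale_at_left)
    moreover have "\<forall>\<^sub>F s in at_left t. u * path_term k (shift [One] x) ((s - 0) / u) = path_term (Suc k) x s"
      using eventually_at_left_less[of t]
      by eventually_elim (use True in \<open>simp add: u_def\<close>)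
    ultimately show ?thesis
      by (auto intro: tendsto_cong[THEN iffD1, rotated])
  next
    case False
    then have "u < 1"
      using Suc.prems by simp
    obtain l where "(path_term k (shift [Two] x) \<longlongrightarrow> l) (at_left ((t - u) / (1 - u)))"
      using Suc.IH[of "(t - u) / (1 - u)" "shift [Two] x"] False \<open>u < 1\<close> Suc.prems
      by (auto simp: field_simps)
    then have "((\<lambda>s. (1 - u) * path_term k (shift [Two] x) ((s - u) / (1 - u))) \<longlongrightarrow> (1 - u) * l) (at_left t)"
      using \<open>u < 1\<close> by (intro tendsto_rescale_at_left) auto
    moreover have "\<forall>\<^sub>F s in at_left t. u < s"
      using False by (intro order_tendstoD(1)[OF tendsto_ident_at]) auto
    then have "\<forall>\<^sub>F s in at_left t.
        (1 - u) * path_term k (shift [Two] x) ((s - u) / (1 - u)) = path_term (Suc k) x s"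
      by eventually_elim (simp add: u_def)
    ultimately show ?thesis
      by (auto intro: tendsto_cong[THEN iffD1, rotated])
  qed
qed

lemma uniform_limit_path_term_sums:
  assumes "regular x"
  shows "uniform_limit {0..1} (\<lambda>n s. \<Sum>k<n. path_term k x s) (\<lambda>s. \<Sum>k. path_term k x s) sequentially"
  using regular_energies(2)[OF assms]
  by (intro Weierstrass_m_test[OF _ summable_path_term_bound]) (auto intro: abs_path_term_le)

lemma qs_process_continuous_from_right:
  assumes x: "regular x" and t: "0 \<le> t" "t < 1"
  shows "continuous (at_right t) (qs_process x)"
proof -
  have inside: "\<forall>\<^sub>F s in at_right t. s \<in> {0..<1}"
    using eventually_at_right_less[of t] order_tendstoD(2)[OF tendsto_ident_at t(2)]
    by eventually_elim (use t in auto)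
  have "((\<lambda>s. \<Sum>k. path_term k x s) \<longlongrightarrow> (\<Sum>k. path_term k x t)) (at_right t)"
  proof (rule swap_uniform_limit'[OF _ _ uniform_limit_path_term_sums[OF x]])
    show "\<forall>\<^sub>F n in sequentially.
        ((\<lambda>s. \<Sum>k<n. path_term k x s) \<longlongrightarrow> (\<Sum>k<n. path_term k x t)) (at_right t)"
      using t by (intro always_eventually allI tendsto_sum path_term_continuous_from_right)
    show "(\<lambda>n. \<Sum>k<n. path_term k x t) \<longlonglongrightarrow> (\<Sum>k. path_term k x t)"
      using t by (intro summable_LIMSEQ summable_path_term x) auto
    show "\<forall>\<^sub>F s in at_right t. s \<in> {0..1}"
      using inside by eventually_elim auto
  qed simp
  moreover have "\<forall>\<^sub>F s in at_right t. (\<Sum>k. path_term k x s) = qs_process x s"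
    using inside by eventually_elim (auto simp: qs_process_def)
  ultimately have "(qs_process x \<longlongrightarrow> (\<Sum>k. path_term k x t)) (at_right t)"
    by (simp add: tendsto_cong)
  then show ?thesis
    using t by (simp add: continuous_within qs_process_def)
qed

lemma qs_process_left_limit:
  assumes x: "regular x" and t: "0 < t" "t \<le> 1"
  shows "\<exists>l. (qs_process x \<longlongrightarrow> l) (at_left t)"
proof -
  define bound where "bound k = sqrt (enn2real (sq_length_sum k root_term_bound x))" for k
  have "\<forall>k. \<exists>l. (path_term k x \<longlongrightarrow> l) (at_left t)"
    using path_term_left_limit[OF t] by blast
  from choice[OF this] obtain l where l: "\<And>k. (path_term k x \<longlongrightarrow> l k) (at_left t)"
    by blast
  have inside: "\<forall>\<^sub>F s in at_left t. s \<in> {0..<1}"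
    using eventually_at_left_less[of t] order_tendstoD(1)[OF tendsto_ident_at t(1)]
    by eventually_elim (use t in auto)
  have "\<bar>l k\<bar> \<le> bound k" for k
  proof (rule tendsto_upperbound[OF tendsto_rabs[OF l]])
    show "\<forall>\<^sub>F s in at_left t. \<bar>path_term k x s\<bar> \<le> bound k"
      using inside unfolding bound_def
      by eventually_elim (rule abs_path_term_le[OF regular_energies(2)[OF x]]; simp)
  qed simp
  then have "summable l"
    by (intro summable_comparison_test[OF _ summable_path_term_bound[OF regular_energies(2)[OF x]]])
       (simp add: bound_def)
  have "((\<lambda>s. \<Sum>k. path_term k x s) \<longlongrightarrow> (\<Sum>k. l k)) (at_left t)"
  proof (rule swap_uniform_limit'[OF _ _ uniform_limit_path_term_sums[OF x]])
    show "\<forall>\<^sub>F n in sequentially. ((\<lambda>s. \<Sum>k<n. path_term k x s) \<longlongrightarrow> (\<Sum>k<n. l k)) (at_left t)"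
      by (intro always_eventually allI tendsto_sum l)
    show "(\<lambda>n. \<Sum>k<n. l k) \<longlonglongrightarrow> (\<Sum>k. l k)"
      using \<open>summable l\<close> by (rule summable_LIMSEQ)
    show "\<forall>\<^sub>F s in at_left t. s \<in> {0..1}"
      using inside by eventually_elim auto
  qed simp
  moreover have "\<forall>\<^sub>F s in at_left t. (\<Sum>k. path_term k x s) = qs_process x s"
    using inside by eventually_elim (simp add: qs_process_def)
  ultimately have "(qs_process x \<longlongrightarrow> (\<Sum>k. l k)) (at_left t)"
    by (simp add: tendsto_cong)
  then show ?thesis ..
qed

lemma cadlag_qs_process:
  assumes "regular x"
  shows "cadlag (qs_process x)"
  unfolding cadlag_def
proof (intro conjI ballI allI impI)
  show "continuous (at_right t) (qs_process x)" if "t \<in> {0..<1}" for t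
    using qs_process_continuous_from_right[OF assms] that by simp
  show "\<exists>l. (qs_process x \<longlongrightarrow> l) (at_left t)" if "t \<in> {0<..1}" for t
    using qs_process_left_limit[OF assms] that by simp
  show "qs_process x t = 0" if "t \<notin> {0..1}" for t
    using that by (auto simp: qs_process_def)
qed

text \<open>On the null set of irregular labellings the path is set to 0, so that it always lies in \<open>D\<close>.\<close>

definition qs_path :: "labels \<Rightarrow> real \<Rightarrow> real" where
  "qs_path x = (if regular x then qs_process x else (\<lambda>_. 0))"

lemma qs_path_in_D: "qs_path x \<in> D_set"
proof -
  have "cadlag (\<lambda>_::real. 0::real)"
    unfolding cadlag_def by auto
  then show ?thesis
    using cadlag_qs_process by (simp add: D_set_def qs_path_def)
qed

lemma qs_path_shift_recursion:
  assumes "regular x" "0 \<le> t" "t \<le> 1"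
  shows "qs_path (shift v x) t =
    (if t < x v then x v * qs_path (shift (v @ [One]) x) (t / x v)
     else x v * qs_path (shift (v @ [One]) x) 1
          + (1 - x v) * qs_path (shift (v @ [Two]) x) ((t - x v) / (1 - x v)))
    + Ctx t (x v)"
proof -
  have "qs_path (shift v x) = qs_process (shift v x)"
    "qs_path (shift (v @ [a]) x) = qs_process (shift [a] (shift v x))" for a
    using regular_shift[OF assms(1)] by (simp_all add: qs_path_def)
  moreover have "shift v x [] = x v"
    by (simp add: shift_apply)
  ultimately show ?thesis
    using qs_process_recursion[OF regular_shift[OF assms(1)] assms(2,3), of v] by simp
qed

lemma measurable_regular [measurable]: "Measurable.pred label_space regular"
  unfolding regular_def by measurable

lemma measurable_path_term_uncurried:
  "(\<lambda>z. path_term k (fst z) (snd z)) \<in> borel_measurable (label_space \<Otimes>\<^sub>M borel)"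
proof (induction k)
  case 0
  show ?case
    by simp measurable
next
  case (Suc k)
  have one: "(\<lambda>z. (shift [One] (fst z), snd z / root (fst z)))
      \<in> measurable (label_space \<Otimes>\<^sub>M borel) (label_space \<Otimes>\<^sub>M borel)"
    by measurable
  have two: "(\<lambda>z. (shift [Two] (fst z), (snd z - root (fst z)) / (1 - root (fst z))))
      \<in> measurable (label_space \<Otimes>\<^sub>M borel) (label_space \<Otimes>\<^sub>M borel)"
    by measurable
  note [measurable] = measurable_compose[OF one Suc.IH, simplified]
    measurable_compose[OF two Suc.IH, simplified]
  show ?case
    by simp measurable
qed

lemma measurable_path_term [measurable]: "(\<lambda>x. path_term k x t) \<in> borel_measurable label_space"
  using measurable_compose[OF _ measurable_path_term_uncurried[of k], of "\<lambda>x. (x, t)" label_space]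
  by simp

lemma measurable_qs_path: "qs_path \<in> measurable label_space D_meas"
  unfolding D_meas_def
proof (rule measurable_restrict_space2)
  show "qs_path \<in> space label_space \<rightarrow> D_set"
    using qs_path_in_D by auto
  show "qs_path \<in> measurable label_space (Pi\<^sub>M UNIV (\<lambda>_. borel))"
  proof (rule measurable_PiM_single')
    fix t :: real
    have "(\<lambda>x. qs_path x t) = (\<lambda>x. if regular x then qs_process x t else 0)"
      by (auto simp: qs_path_def)
    also have "\<dots> \<in> borel_measurable label_space"
      unfolding qs_process_def by measurable
    finally show "(\<lambda>x. qs_path x t) \<in> borel_measurable label_space" .
  qed (auto simp: space_PiM)
qed

section \<open>Independent uniform labels\<close>

definition labelling :: "(letter list \<Rightarrow> 'a \<Rightarrow> real) \<Rightarrow> 'a \<Rightarrow> labels" where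
  "labelling U \<omega> = (\<lambda>w. U w \<omega>)"

definition depends_on :: "(labels \<Rightarrow> 'b) \<Rightarrow> letter list set \<Rightarrow> bool" where
  "depends_on f I \<longleftrightarrow> (\<forall>x y. (\<forall>i\<in>I. x i = y i) \<longrightarrow> f x = f y)"

definition extend_by_zero :: "letter list set \<Rightarrow> labels \<Rightarrow> labels" where
  "extend_by_zero I y = (\<lambda>i. if i \<in> I then y i else 0)"

lemma depends_on_restrict: "depends_on f I \<Longrightarrow> f (extend_by_zero I (restrict x I)) = f x"
  unfolding depends_on_def extend_by_zero_def by auto

lemma depends_on_root: "depends_on (\<lambda>x. f (root x)) {[]}"
  unfolding depends_on_def root_def by auto

lemma shift_single_cong: "(\<And>w. x (a # w) = y (a # w)) \<Longrightarrow> shift [a] x = shift [a] y"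
  by (simp add: shift_def)

lemma depends_on_shift: "depends_on (\<lambda>x. f (shift [a] x)) (range ((#) a))"
  unfolding depends_on_def using shift_single_cong by (metis rangeI)

lemma depends_on_root_shift: "depends_on (\<lambda>x. f (root x) (shift [a] x)) ({[]} \<union> range ((#) a))"
  unfolding depends_on_def
proof (intro allI impI)
  fix x y :: labels
  assume "\<forall>i\<in>{[]} \<union> range ((#) a). x i = y i"
  then have "shift [a] x = shift [a] y" "root x = root y"
    by (auto simp: root_def intro!: shift_single_cong)
  then show "f (root x) (shift [a] x) = f (root y) (shift [a] y)"
    by simp
qed

lemma measurable_extend_by_zero: "extend_by_zero I \<in> measurable (Pi\<^sub>M I (\<lambda>_. borel)) label_space"
proof (rule measurable_PiM_single')
  show "(\<lambda>y. extend_by_zero I y i) \<in> borel_measurable (Pi\<^sub>M I (\<lambda>_. borel))" for i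
    by (cases "i \<in> I") (simp_all add: extend_by_zero_def)
qed (auto simp: space_PiM)

abbreviation uniform01 :: "real measure" where
  "uniform01 \<equiv> uniform_measure lborel {0..1}"

abbreviation uniform_labels :: "labels measure" where
  "uniform_labels \<equiv> Pi\<^sub>M UNIV (\<lambda>_. uniform01)"

locale uniform_tree = prob_space M for M :: "'a measure" +
  fixes U :: "letter list \<Rightarrow> 'a \<Rightarrow> real"
  assumes indep: "indep_vars (\<lambda>_. borel) U UNIV"
    and measurable_U [measurable]: "\<And>v. U v \<in> borel_measurable M"
    and uniform: "\<And>v. distr M lborel (U v) = uniform01"
begin

lemma measurable_labelling [measurable]: "labelling U \<in> measurable M label_space"
  unfolding labelling_def by (rule measurable_PiM_single') (auto simp: space_PiM)

lemma distr_U: "distr M borel (U v) = uniform01"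
proof -
  have "distr M borel (U v) = distr M lborel (U v)"
    by (intro distr_cong) auto
  then show ?thesis
    using uniform by simp
qed

lemma distr_labelling: "distr M label_space (labelling U) = uniform_labels"
proof -
  have "distr M label_space (\<lambda>\<omega>. \<lambda>i\<in>UNIV. U i \<omega>) = Pi\<^sub>M UNIV (\<lambda>i. distr M borel (U i))"
    using indep by (subst indep_vars_iff_distr_eq_PiM[symmetric]) auto
  moreover have "(\<lambda>\<omega>. \<lambda>i\<in>UNIV. U i \<omega>) = labelling U"
    by (simp add: labelling_def restrict_def fun_eq_iff)
  ultimately show ?thesis
    by (simp add: distr_U)
qed

lemma distr_shift_labelling: "distr M label_space (\<lambda>\<omega>. shift v (labelling U \<omega>)) = uniform_labels"
proof -
  have reindex: "(\<lambda>x. \<lambda>w\<in>UNIV. x (v @ w)) \<in> measurable label_space label_space"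
    by (rule measurable_PiM_single') (auto simp: space_PiM)
  have "distr M label_space (\<lambda>\<omega>. shift v (labelling U \<omega>))
      = distr (distr M label_space (labelling U)) label_space (\<lambda>x. \<lambda>w\<in>UNIV. x (v @ w))"
    by (subst distr_distr[OF reindex measurable_labelling]) (simp add: comp_def shift_def restrict_def)
  also have "\<dots> = distr uniform_labels (Pi\<^sub>M UNIV (\<lambda>w. (\<lambda>_. uniform01) (v @ w))) (\<lambda>x. \<lambda>w\<in>UNIV. x (v @ w))"
    unfolding distr_labelling by (intro distr_cong) (auto intro!: sets_PiM_cong)
  also have "\<dots> = uniform_labels"
    by (subst distr_PiM_reindex) (auto simp: prob_space_uniform_measure inj_on_def)
  finally show ?thesis .
qed

lemma nn_integral_shift_labelling:
  assumes [measurable]: "f \<in> borel_measurable label_space"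
  shows "(\<integral>\<^sup>+\<omega>. f (shift v (labelling U \<omega>)) \<partial>M) = (\<integral>\<^sup>+\<omega>. f (labelling U \<omega>) \<partial>M)"
  using nn_integral_distr[of "\<lambda>\<omega>. shift v (labelling U \<omega>)" M label_space f]
    nn_integral_distr[of "labelling U" M label_space f]
  by (simp add: distr_shift_labelling distr_labelling)

lemma integral_shift_labelling:
  fixes f :: "labels \<Rightarrow> real"
  assumes [measurable]: "f \<in> borel_measurable label_space"
  shows "(\<integral>\<omega>. f (shift v (labelling U \<omega>)) \<partial>M) = (\<integral>\<omega>. f (labelling U \<omega>) \<partial>M)"
  using integral_distr[of "\<lambda>\<omega>. shift v (labelling U \<omega>)" M label_space f]
    integral_distr[of "labelling U" M label_space f]
  by (simp add: distr_shift_labelling distr_labelling)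

lemma indep_var_depends_on:
  fixes f g :: "labels \<Rightarrow> 'b::second_countable_topology"
  assumes [measurable]: "f \<in> borel_measurable label_space" "g \<in> borel_measurable label_space"
    and "depends_on f I" "depends_on g J" "I \<inter> J = {}"
  shows "indep_var borel (\<lambda>\<omega>. f (labelling U \<omega>)) borel (\<lambda>\<omega>. g (labelling U \<omega>))"
proof -
  have "indep_var (Pi\<^sub>M I (\<lambda>_. borel)) (\<lambda>\<omega>. restrict (\<lambda>i. U i \<omega>) I)
      (Pi\<^sub>M J (\<lambda>_. borel)) (\<lambda>\<omega>. restrict (\<lambda>i. U i \<omega>) J)"
    using assms by (intro indep_var_restrict[OF indep]) auto
  then have "indep_var borel ((f \<circ> extend_by_zero I) \<circ> (\<lambda>\<omega>. restrict (\<lambda>i. U i \<omega>) I))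
      borel ((g \<circ> extend_by_zero J) \<circ> (\<lambda>\<omega>. restrict (\<lambda>i. U i \<omega>) J))"
    by (rule indep_var_compose) (auto intro: measurable_comp[OF measurable_extend_by_zero])
  then show ?thesis
    using assms(3,4) by (simp add: comp_def labelling_def depends_on_restrict[unfolded labelling_def])
qed

lemma integral_mult_depends_on:
  fixes f g :: "labels \<Rightarrow> real"
  assumes [measurable]: "f \<in> borel_measurable label_space" "g \<in> borel_measurable label_space"
    and "depends_on f I" "depends_on g J" "I \<inter> J = {}"
    and "\<And>x. \<bar>f x\<bar> \<le> B" "\<And>x. \<bar>g x\<bar> \<le> C"
  shows "(\<integral>\<omega>. f (labelling U \<omega>) * g (labelling U \<omega>) \<partial>M)
    = (\<integral>\<omega>. f (labelling U \<omega>) \<partial>M) * (\<integral>\<omega>. g (labelling U \<omega>) \<partial>M)"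
proof (rule indep_var_lebesgue_integral)
  show "indep_var borel (\<lambda>\<omega>. f (labelling U \<omega>)) borel (\<lambda>\<omega>. g (labelling U \<omega>))"
    using assms(1-5) by (rule indep_var_depends_on)
  show "integrable M (\<lambda>\<omega>. f (labelling U \<omega>))"
    by (rule integrable_const_bound[where B = B]) (use assms(6) in auto)
  show "integrable M (\<lambda>\<omega>. g (labelling U \<omega>))"
    by (rule integrable_const_bound[where B = C]) (use assms(7) in auto)
qed

lemma nn_integral_mult_depends_on:
  fixes f g :: "labels \<Rightarrow> ennreal"
  assumes [measurable]: "f \<in> borel_measurable label_space" "g \<in> borel_measurable label_space"
    and "depends_on f I" "depends_on g J" "I \<inter> J = {}"
  shows "(\<integral>\<^sup>+\<omega>. f (labelling U \<omega>) * g (labelling U \<omega>) \<partial>M)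
    = (\<integral>\<^sup>+\<omega>. f (labelling U \<omega>) \<partial>M) * (\<integral>\<^sup>+\<omega>. g (labelling U \<omega>) \<partial>M)"
proof -
  have "indep_var borel (\<lambda>\<omega>. f (labelling U \<omega>)) borel (\<lambda>\<omega>. g (labelling U \<omega>))"
    using assms by (rule indep_var_depends_on)
  moreover have borel: "(\<lambda>_. borel) = case_bool borel borel"
    by (auto split: bool.split)
  ultimately have "indep_vars (\<lambda>_. borel) (case_bool (\<lambda>\<omega>. f (labelling U \<omega>)) (\<lambda>\<omega>. g (labelling U \<omega>))) UNIV"
    unfolding indep_var_def by (subst borel)
  then have "(\<integral>\<^sup>+\<omega>. (\<Prod>b\<in>UNIV. case_bool (\<lambda>\<omega>. f (labelling U \<omega>)) (\<lambda>\<omega>. g (labelling U \<omega>)) b \<omega>) \<partial>M)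
      = (\<Prod>b\<in>UNIV. \<integral>\<^sup>+\<omega>. case_bool (\<lambda>\<omega>. f (labelling U \<omega>)) (\<lambda>\<omega>. g (labelling U \<omega>)) b \<omega> \<partial>M)"
    by (intro indep_vars_nn_integral) auto
  then show ?thesis
    by (simp add: UNIV_bool mult.commute)
qed

lemma integral_root_mult_child:
  fixes f :: "real \<Rightarrow> real" and g :: "labels \<Rightarrow> real"
  assumes [measurable]: "f \<in> borel_measurable borel" "g \<in> borel_measurable label_space"
    and "\<And>u. u \<in> {0..1} \<Longrightarrow> \<bar>f u\<bar> \<le> B" "\<And>x. \<bar>g x\<bar> \<le> C"
  shows "(\<integral>\<omega>. f (root (labelling U \<omega>)) * g (shift [a] (labelling U \<omega>)) \<partial>M)
    = (\<integral>\<omega>. f (root (labelling U \<omega>)) \<partial>M) * (\<integral>\<omega>. g (labelling U \<omega>) \<partial>M)"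
proof -
  have "{[]} \<inter> range ((#) a) = {}"
    by auto
  then have "(\<integral>\<omega>. f (root (labelling U \<omega>)) * g (shift [a] (labelling U \<omega>)) \<partial>M)
      = (\<integral>\<omega>. f (root (labelling U \<omega>)) \<partial>M) * (\<integral>\<omega>. g (shift [a] (labelling U \<omega>)) \<partial>M)"
    using depends_on_root[of f] depends_on_shift[of g a] assms(3,4)
    by (intro integral_mult_depends_on[where I = "{[]}" and J = "range ((#) a)" and B = B and C = C]) auto
  then show ?thesis
    by (simp add: integral_shift_labelling)
qed

lemma nn_integral_root_mult_child:
  fixes f :: "real \<Rightarrow> ennreal" and g :: "labels \<Rightarrow> ennreal"
  assumes [measurable]: "f \<in> borel_measurable borel" "g \<in> borel_measurable label_space"
  shows "(\<integral>\<^sup>+\<omega>. f (root (labelling U \<omega>)) * g (shift [a] (labelling U \<omega>)) \<partial>M)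
    = (\<integral>\<^sup>+\<omega>. f (root (labelling U \<omega>)) \<partial>M) * (\<integral>\<^sup>+\<omega>. g (labelling U \<omega>) \<partial>M)"
proof -
  have "{[]} \<inter> range ((#) a) = {}"
    by auto
  then have "(\<integral>\<^sup>+\<omega>. f (root (labelling U \<omega>)) * g (shift [a] (labelling U \<omega>)) \<partial>M)
      = (\<integral>\<^sup>+\<omega>. f (root (labelling U \<omega>)) \<partial>M) * (\<integral>\<^sup>+\<omega>. g (shift [a] (labelling U \<omega>)) \<partial>M)"
    using depends_on_root[of f] depends_on_shift[of g a]
    by (intro nn_integral_mult_depends_on[where I = "{[]}" and J = "range ((#) a)"]) auto
  then show ?thesis
    by (simp add: nn_integral_shift_labelling)
qed

lemma nn_integral_root:
  fixes h :: "real \<Rightarrow> real"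
  assumes [measurable]: "h \<in> borel_measurable borel"
    and nonneg: "\<And>u. u \<in> {0..1} \<Longrightarrow> 0 \<le> h u" and integral: "(h has_integral r) {0..1}"
  shows "(\<integral>\<^sup>+\<omega>. ennreal (h (root (labelling U \<omega>))) \<partial>M) = ennreal r"
proof -
  have "(\<integral>\<^sup>+\<omega>. ennreal (h (root (labelling U \<omega>))) \<partial>M)
      = (\<integral>\<^sup>+u. ennreal (h (clamp01 u)) \<partial>distr M borel (U []))"
    by (subst nn_integral_distr) (auto simp: root_def labelling_def)
  also have "\<dots> = (\<integral>\<^sup>+u. ennreal (h (clamp01 u)) \<partial>uniform01)"
    by (simp add: distr_U)
  also have "\<dots> = (\<integral>\<^sup>+u. ennreal (h (clamp01 u)) * indicator {0..1} u \<partial>lborel) / 1"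
    by (subst nn_integral_uniform_measure) auto
  also have "(\<integral>\<^sup>+u. ennreal (h (clamp01 u)) * indicator {0..1} u \<partial>lborel)
      = (\<integral>\<^sup>+u. ennreal (if u \<in> {0..1} then h u else 0) \<partial>lborel)"
    by (intro nn_integral_cong) (auto simp: clamp01_id split: split_indicator)
  also have "\<dots> = ennreal r"
    using nonneg has_integral_restrict_UNIV[of "{0..1}" h r] integral
    by (intro nn_integral_has_integral_lborel) auto
  finally show ?thesis
    by (simp add: divide_ennreal_def)
qed

lemma integral_root:
  fixes h :: "real \<Rightarrow> real"
  assumes [measurable]: "h \<in> borel_measurable borel"
    and nonneg: "\<And>u. u \<in> {0..1} \<Longrightarrow> 0 \<le> h u" and integral: "(h has_integral r) {0..1}"
  shows "(\<integral>\<omega>. h (root (labelling U \<omega>)) \<partial>M) = r"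
proof -
  have "0 \<le> r"
    by (rule has_integral_nonneg[OF integral]) (use nonneg in auto)
  then show ?thesis
    using nn_integral_root[OF assms] nonneg
    by (subst integral_eq_nn_integral) auto
qed

lemma integrable_labelling_bounded:
  fixes f :: "labels \<Rightarrow> real"
  assumes "f \<in> borel_measurable label_space" "\<And>x. \<bar>f x\<bar> \<le> B"
  shows "integrable M (\<lambda>\<omega>. f (labelling U \<omega>))"
  by (rule integrable_const_bound[where B = B]) (use assms in auto)

lemma nn_integral_root_sq: "(\<integral>\<^sup>+\<omega>. ennreal (root (labelling U \<omega>) ^ 2) \<partial>M) = ennreal (1 / 3)"
  by (rule nn_integral_root[OF _ _ has_integral_square01]) auto

lemma nn_integral_one_minus_root_sq:
  "(\<integral>\<^sup>+\<omega>. ennreal ((1 - root (labelling U \<omega>)) ^ 2) \<partial>M) = ennreal (1 / 3)"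
  by (rule nn_integral_root[OF _ _ has_integral_reflect01[OF has_integral_square01]]) auto

lemma integral_level_cost_0: "(\<integral>\<omega>. level_cost 0 (labelling U \<omega>) \<partial>M) = 0"
proof -
  define a where "a \<omega> = - (root (labelling U \<omega>) * ln (root (labelling U \<omega>)))" for \<omega>
  define b where "b \<omega> = - ((1 - root (labelling U \<omega>)) * ln (1 - root (labelling U \<omega>)))" for \<omega>
  have a: "integral\<^sup>L M a = 1 / 4"
    unfolding a_def
    by (rule integral_root[OF _ _ has_integral_neg_xlnx01]) (use xlnx_bounds in auto)
  have b: "integral\<^sup>L M b = 1 / 4"
    unfolding b_def
    by (rule integral_root[OF _ _ has_integral_reflect01[OF has_integral_neg_xlnx01]])
       (use xlnx_bounds[of "1 - _"] in auto)
  have "integrable M a" "integrable M b"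
    unfolding a_def b_def
    by (intro integrable_labelling_bounded[where B = 1];
        use xlnx_bounds[of "root _"] xlnx_bounds[of "1 - root _"] in force)+
  moreover have "level_cost 0 (labelling U \<omega>) = 1 - 2 * a \<omega> - 2 * b \<omega>" for \<omega>
    by (simp add: a_def b_def Cx_def algebra_simps)
  ultimately show ?thesis
    using a b by (simp add: prob_space)
qed

lemma integral_level_cost: "(\<integral>\<omega>. level_cost j (labelling U \<omega>) \<partial>M) = 0"
proof (induction j)
  case 0
  show ?case
    by (rule integral_level_cost_0)
next
  case (Suc j)
  have "(\<integral>\<omega>. root (labelling U \<omega>) * level_cost j (shift [One] (labelling U \<omega>)) \<partial>M) = 0"
    "(\<integral>\<omega>. (1 - root (labelling U \<omega>)) * level_cost j (shift [Two] (labelling U \<omega>)) \<partial>M) = 0"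
    using integral_root_mult_child[of "\<lambda>u. u" "level_cost j" 1 3 One]
      integral_root_mult_child[of "\<lambda>u. 1 - u" "level_cost j" 1 3 Two] abs_level_cost_le Suc.IH
    by simp_all
  moreover have "integrable M (\<lambda>\<omega>. root (labelling U \<omega>) * level_cost j (shift [One] (labelling U \<omega>)))"
    "integrable M (\<lambda>\<omega>. (1 - root (labelling U \<omega>)) * level_cost j (shift [Two] (labelling U \<omega>)))"
    by (intro integrable_labelling_bounded[where B = 3] abs_mult_unit_le abs_level_cost_le; simp)+
  ultimately show ?case
    by simp
qed

lemma integral_level_cost_cross:
  "(\<integral>\<omega>. root (labelling U \<omega>) * (1 - root (labelling U \<omega>)) * level_cost j (shift [One] (labelling U \<omega>))
      * level_cost j (shift [Two] (labelling U \<omega>)) \<partial>M) = 0"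
proof -
  have "({[]} \<union> range ((#) One)) \<inter> range ((#) Two) = {}"
    by auto
  then have "(\<integral>\<omega>. root (labelling U \<omega>) * (1 - root (labelling U \<omega>))
        * level_cost j (shift [One] (labelling U \<omega>)) * level_cost j (shift [Two] (labelling U \<omega>)) \<partial>M)
      = (\<integral>\<omega>. root (labelling U \<omega>) * (1 - root (labelling U \<omega>))
          * level_cost j (shift [One] (labelling U \<omega>)) \<partial>M)
        * (\<integral>\<omega>. level_cost j (shift [Two] (labelling U \<omega>)) \<partial>M)"
    using depends_on_root_shift[of "\<lambda>q z. q * (1 - q) * level_cost j z" One]
      depends_on_shift[of "level_cost j" Two] abs_level_cost_le
    by (intro integral_mult_depends_on[where I = "{[]} \<union> range ((#) One)" and J = "range ((#) Two)"
          and B = 3 and C = 3])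
       (auto intro!: abs_mult_unit_le mult_le_one)
  also have "(\<integral>\<omega>. level_cost j (shift [Two] (labelling U \<omega>)) \<partial>M) = 0"
    using integral_level_cost by (simp add: integral_shift_labelling)
  finally show ?thesis
    by simp
qed

lemma integral_level_cost_Suc_sq:
  "(\<integral>\<omega>. level_cost (Suc j) (labelling U \<omega>) ^ 2 \<partial>M)
    = 2 / 3 * (\<integral>\<omega>. level_cost j (labelling U \<omega>) ^ 2 \<partial>M)"
proof -
  let ?X = "labelling U"
  define A where "A x = level_cost j (shift [One] x)" for x
  define B where "B x = level_cost j (shift [Two] x)" for x
  have bounds: "\<bar>A x\<bar> \<le> 3" "\<bar>B x\<bar> \<le> 3" "A x ^ 2 \<le> 9" "B x ^ 2 \<le> 9" for x
    unfolding A_def B_def by (rule abs_level_cost_le level_cost_sq_le)+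
  have square: "level_cost (Suc j) x ^ 2
      = root x ^ 2 * A x ^ 2 + (1 - root x) ^ 2 * B x ^ 2 + 2 * (root x * (1 - root x) * A x * B x)" for x
    by (simp add: A_def B_def power2_eq_square algebra_simps)
  have "(\<integral>\<omega>. root (?X \<omega>) ^ 2 * A (?X \<omega>) ^ 2 \<partial>M) = 1 / 3 * (\<integral>\<omega>. level_cost j (?X \<omega>) ^ 2 \<partial>M)"
    "(\<integral>\<omega>. (1 - root (?X \<omega>)) ^ 2 * B (?X \<omega>) ^ 2 \<partial>M) = 1 / 3 * (\<integral>\<omega>. level_cost j (?X \<omega>) ^ 2 \<partial>M)"
    using integral_root_mult_child[of "\<lambda>u. u ^ 2" "\<lambda>x. level_cost j x ^ 2" 1 9 One]
      integral_root_mult_child[of "\<lambda>u. (1 - u) ^ 2" "\<lambda>x. level_cost j x ^ 2" 1 9 Two]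
      integral_root[OF _ _ has_integral_square01]
      integral_root[OF _ _ has_integral_reflect01[OF has_integral_square01]] level_cost_sq_le
    by (simp_all add: A_def B_def power_le_one)
  moreover have "(\<integral>\<omega>. root (?X \<omega>) * (1 - root (?X \<omega>)) * A (?X \<omega>) * B (?X \<omega>) \<partial>M) = 0"
    unfolding A_def B_def by (rule integral_level_cost_cross)
  moreover have cross_bound: "\<bar>root x * (1 - root x) * A x * B x\<bar> \<le> 9" for x
  proof -
    have "\<bar>root x * (1 - root x) * A x\<bar> \<le> 3"
      using bounds by (intro abs_mult_unit_le mult_le_one) auto
    then have "\<bar>root x * (1 - root x) * A x\<bar> * \<bar>B x\<bar> \<le> 3 * 3"
      using bounds by (intro mult_mono) auto
    then show ?thesis
      by (simp add: abs_mult)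
  qed
  moreover have "integrable M (\<lambda>\<omega>. root (?X \<omega>) ^ 2 * A (?X \<omega>) ^ 2)"
    "integrable M (\<lambda>\<omega>. (1 - root (?X \<omega>)) ^ 2 * B (?X \<omega>) ^ 2)"
    using bounds unfolding A_def B_def
    by (intro integrable_labelling_bounded[where B = 9] abs_mult_unit_le; simp add: power_le_one)+
  moreover have "integrable M (\<lambda>\<omega>. root (?X \<omega>) * (1 - root (?X \<omega>)) * A (?X \<omega>) * B (?X \<omega>))"
    using cross_bound unfolding A_def B_def by (intro integrable_labelling_bounded[where B = 9]) auto
  ultimately show ?thesis
    unfolding square by simp
qed

lemma integral_level_cost_sq_le: "(\<integral>\<omega>. level_cost j (labelling U \<omega>) ^ 2 \<partial>M) \<le> 9 * (2/3) ^ j"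
proof (induction j)
  case 0
  have "(\<integral>\<omega>. level_cost 0 (labelling U \<omega>) ^ 2 \<partial>M) \<le> (\<integral>\<omega>. 9 \<partial>M)"
    by (intro integral_mono integrable_labelling_bounded[where B = 9]) (use level_cost_sq_le[of 0] in auto)
  then show ?case
    by (simp add: prob_space)
next
  case (Suc j)
  have "(\<integral>\<omega>. level_cost (Suc j) (labelling U \<omega>) ^ 2 \<partial>M)
      = 2 / 3 * (\<integral>\<omega>. level_cost j (labelling U \<omega>) ^ 2 \<partial>M)"
    by (rule integral_level_cost_Suc_sq)
  also have "\<dots> \<le> 2 / 3 * (9 * (2/3) ^ j)"
    using Suc.IH by simp
  finally show ?case
    by simp
qed

lemma nn_integral_cost_energy: "(\<integral>\<^sup>+\<omega>. cost_energy (labelling U \<omega>) \<partial>M) \<le> 45"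
proof -
  have "(\<integral>\<^sup>+\<omega>. cost_energy (labelling U \<omega>) \<partial>M)
      = (\<Sum>j. \<integral>\<^sup>+\<omega>. ennreal ((6/5) ^ j * level_cost j (labelling U \<omega>) ^ 2) \<partial>M)"
    unfolding cost_energy_def by (rule nn_integral_suminf) measurable
  also have "\<dots> \<le> (\<Sum>j. ennreal (9 * (4/5) ^ j))"
  proof (intro suminf_le summableI)
    fix j
    have "integrable M (\<lambda>\<omega>. (6/5) ^ j * level_cost j (labelling U \<omega>) ^ 2)"
      using level_cost_sq_le
      by (intro integrable_labelling_bounded[where B = "(6/5) ^ j * 9"]) (auto intro: mult_left_mono)
    then have "(\<integral>\<^sup>+\<omega>. ennreal ((6/5) ^ j * level_cost j (labelling U \<omega>) ^ 2) \<partial>M)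
        = ennreal ((6/5) ^ j * (\<integral>\<omega>. level_cost j (labelling U \<omega>) ^ 2 \<partial>M))"
      by (subst nn_integral_eq_integral) auto
    also have "\<dots> \<le> ennreal ((6/5) ^ j * (9 * (2/3) ^ j))"
      by (intro ennreal_leI mult_left_mono integral_level_cost_sq_le) auto
    also have "(6/5) ^ j * (9 * (2/3) ^ j) = 9 * (4/5 :: real) ^ j"
      by (simp add: power_mult_distrib[symmetric])
    finally show "(\<integral>\<^sup>+\<omega>. ennreal ((6/5) ^ j * level_cost j (labelling U \<omega>) ^ 2) \<partial>M)
        \<le> ennreal (9 * (4/5) ^ j)" .
  qed
  also have "\<dots> = 45"
    by (subst suminf_ennreal_geometric) auto
  finally show ?thesis .
qed

lemma nn_integral_root_term_bound: "(\<integral>\<^sup>+\<omega>. root_term_bound (labelling U \<omega>) \<partial>M) \<le> 668"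
proof -
  have "(\<integral>\<^sup>+\<omega>. root_term_bound (labelling U \<omega>) \<partial>M)
      \<le> (\<integral>\<^sup>+\<omega>. 128 + 12 * cost_energy (shift [One] (labelling U \<omega>)) \<partial>M)"
    by (intro nn_integral_mono root_term_bound_le)
  also have "\<dots> = 128 + 12 * (\<integral>\<^sup>+\<omega>. cost_energy (labelling U \<omega>) \<partial>M)"
    by (simp add: nn_integral_add nn_integral_cmult emeasure_space_1 nn_integral_shift_labelling)
  also have "\<dots> \<le> 128 + 12 * 45"
    by (intro add_left_mono mult_left_mono nn_integral_cost_energy) auto
  finally show ?thesis
    by simp
qed

lemma nn_integral_sq_length_sum:
  assumes [measurable]: "h \<in> borel_measurable label_space"
    and "0 \<le> c" and bound: "(\<integral>\<^sup>+\<omega>. h (labelling U \<omega>) \<partial>M) \<le> ennreal c"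
  shows "(\<integral>\<^sup>+\<omega>. sq_length_sum k h (labelling U \<omega>) \<partial>M) \<le> ennreal ((2/3) ^ k * c)"
proof (induction k)
  case 0
  show ?case
    using bound by simp
next
  case (Suc k)
  note [measurable] = measurable_sq_length_sum[OF assms(1)]
  have "(\<integral>\<^sup>+\<omega>. sq_length_sum (Suc k) h (labelling U \<omega>) \<partial>M)
      = (\<integral>\<^sup>+\<omega>. ennreal (root (labelling U \<omega>) ^ 2) * sq_length_sum k h (shift [One] (labelling U \<omega>)) \<partial>M)
        + (\<integral>\<^sup>+\<omega>. ennreal ((1 - root (labelling U \<omega>)) ^ 2)
            * sq_length_sum k h (shift [Two] (labelling U \<omega>)) \<partial>M)"
    by simp (rule nn_integral_add; measurable)
  also have "\<dots> = ennreal (1 / 3) * (\<integral>\<^sup>+\<omega>. sq_length_sum k h (labelling U \<omega>) \<partial>M)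
      + ennreal (1 / 3) * (\<integral>\<^sup>+\<omega>. sq_length_sum k h (labelling U \<omega>) \<partial>M)"
    using nn_integral_root_mult_child[of "\<lambda>u. ennreal (u ^ 2)" "sq_length_sum k h" One]
      nn_integral_root_mult_child[of "\<lambda>u. ennreal ((1 - u) ^ 2)" "sq_length_sum k h" Two]
    by (simp add: nn_integral_root_sq nn_integral_one_minus_root_sq)
  also have "\<dots> = ennreal (2 / 3) * (\<integral>\<^sup>+\<omega>. sq_length_sum k h (labelling U \<omega>) \<partial>M)"
    by (simp add: distrib_right[symmetric] ennreal_plus[symmetric] del: ennreal_plus)
  also have "\<dots> \<le> ennreal (2 / 3) * ennreal ((2/3) ^ k * c)"
    by (intro mult_left_mono Suc.IH) auto
  also have "\<dots> = ennreal ((2/3) ^ Suc k * c)"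
    using \<open>0 \<le> c\<close> by (simp add: ennreal_mult[symmetric] mult.assoc)
  finally show ?case .
qed

lemma nn_integral_path_energy: "(\<integral>\<^sup>+\<omega>. path_energy (labelling U \<omega>) \<partial>M) \<le> 3340"
proof -
  have "(\<integral>\<^sup>+\<omega>. path_energy (labelling U \<omega>) \<partial>M)
      = (\<Sum>k. ennreal ((6/5) ^ k) * (\<integral>\<^sup>+\<omega>. sq_length_sum k root_term_bound (labelling U \<omega>) \<partial>M))"
    unfolding path_energy_def by (subst nn_integral_suminf) (auto simp: nn_integral_cmult)
  also have "\<dots> \<le> (\<Sum>k. ennreal ((6/5) ^ k) * ennreal ((2/3) ^ k * 668))"
    using nn_integral_root_term_bound
    by (intro suminf_le summableI mult_left_mono nn_integral_sq_length_sum) auto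
  also have "\<dots> = (\<Sum>k. ennreal (668 * (4/5) ^ k))"
  proof (rule suminf_cong)
    fix k
    have "(6/5) ^ k * ((2/3) ^ k * 668) = 668 * (4/5 :: real) ^ k"
      by (simp add: power_mult_distrib[symmetric])
    then show "ennreal ((6/5) ^ k) * ennreal ((2/3) ^ k * 668) = ennreal (668 * (4/5) ^ k)"
      by (subst ennreal_mult[symmetric]) auto
  qed
  also have "\<dots> = 3340"
    by (subst suminf_ennreal_geometric) auto
  finally show ?thesis .
qed

lemma AE_regular_labelling: "AE \<omega> in M. regular (labelling U \<omega>)"
proof -
  have finite_shift: "AE \<omega> in M. f (shift w (labelling U \<omega>)) < \<infinity>"
    if [measurable]: "f \<in> borel_measurable label_space" and "(\<integral>\<^sup>+\<omega>. f (labelling U \<omega>) \<partial>M) < \<infinity>"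
    for f w
  proof -
    have "(\<integral>\<^sup>+\<omega>. f (shift w (labelling U \<omega>)) \<partial>M) \<noteq> \<infinity>"
      using that by (simp add: nn_integral_shift_labelling)
    then have "AE \<omega> in M. f (shift w (labelling U \<omega>)) \<noteq> \<infinity>"
      by (intro nn_integral_PInf_AE) auto
    then show ?thesis
      by (simp add: less_top)
  qed
  have interior: "AE \<omega> in M. 0 < U w \<omega> \<and> U w \<omega> < 1" for w
  proof -
    have "AE u in lborel. u \<in> {0..1::real} \<longrightarrow> 0 < u \<and> u < 1"
      using AE_lborel_singleton[of 0] AE_lborel_singleton[of 1] by eventually_elim auto
    then have "AE u in distr M borel (U w). 0 < u \<and> u < 1"
      unfolding distr_U by (subst AE_uniform_measure) auto
    then show ?thesis
      by (subst (asm) AE_distr_iff) auto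
  qed
  have "AE \<omega> in M. \<forall>w. 0 < U w \<omega> \<and> U w \<omega> < 1
      \<and> cost_energy (shift w (labelling U \<omega>)) < \<infinity> \<and> path_energy (shift w (labelling U \<omega>)) < \<infinity>"
    unfolding AE_all_countable
    using interior finite_shift[OF _ le_less_trans[OF nn_integral_cost_energy]]
      finite_shift[OF _ le_less_trans[OF nn_integral_path_energy]]
    by (auto intro: eventually_conj)
  then show ?thesis
    by eventually_elim (simp add: regular_def labelling_def shift_def)
qed

lemma distr_qs_path_shift:
  "distr M D_meas (\<lambda>\<omega>. qs_path (shift v (labelling U \<omega>))) = distr uniform_labels D_meas qs_path"
proof -
  have "(\<lambda>\<omega>. shift v (labelling U \<omega>)) \<in> measurable M label_space"
    by measurable
  then have "distr M D_meas (\<lambda>\<omega>. qs_path (shift v (labelling U \<omega>)))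
      = distr (distr M label_space (\<lambda>\<omega>. shift v (labelling U \<omega>))) D_meas qs_path"
    by (subst distr_distr[OF measurable_qs_path]) (simp_all add: comp_def)
  then show ?thesis
    by (simp add: distr_shift_labelling)
qed

end

theorem theorem1:
  fixes M :: "'a measure" and U :: "letter list \<Rightarrow> 'a \<Rightarrow> real"
  assumes "prob_space M"
    and "prob_space.indep_vars M (\<lambda>_. borel) U UNIV"
    and "\<And>v. U v \<in> borel_measurable M"
    and "\<And>v. distr M lborel (U v) = uniform_measure lborel {0..1}"
  shows "\<exists>Y :: letter list \<Rightarrow> 'a \<Rightarrow> real \<Rightarrow> real.
     (\<forall>v. Y v \<in> measurable M D_meas) \<and>
     (\<forall>v w. distr M D_meas (Y v) = distr M D_meas (Y w)) \<and>
     (\<forall>v. AE \<omega> in M. \<forall>t\<in>{0..1}.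
        Y v \<omega> t =
          (if t < U v \<omega> then U v \<omega> * Y (v @ [One]) \<omega> (t / U v \<omega>)
           else U v \<omega> * Y (v @ [One]) \<omega> 1
                + (1 - U v \<omega>) * Y (v @ [Two]) \<omega> ((t - U v \<omega>) / (1 - U v \<omega>)))
          + Ctx t (U v \<omega>))"
proof -
  interpret uniform_tree M U
    using assms by (intro uniform_tree.intro uniform_tree_axioms.intro) auto
  define Y where "Y v \<omega> = qs_path (shift v (labelling U \<omega>))" for v \<omega>
  have "Y v \<in> measurable M D_meas" for v
    unfolding Y_def by (rule measurable_compose[OF _ measurable_qs_path]) measurable
  moreover have "distr M D_meas (Y v) = distr uniform_labels D_meas qs_path" for v
    using distr_qs_path_shift by (simp add: Y_def[abs_def])
  moreover have "AE \<omega> in M. \<forall>t\<in>{0..1}.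
      Y v \<omega> t =
        (if t < U v \<omega> then U v \<omega> * Y (v @ [One]) \<omega> (t / U v \<omega>)
         else U v \<omega> * Y (v @ [One]) \<omega> 1
              + (1 - U v \<omega>) * Y (v @ [Two]) \<omega> ((t - U v \<omega>) / (1 - U v \<omega>)))
        + Ctx t (U v \<omega>)" for v
    using AE_regular_labelling
    by eventually_elim (simp add: Y_def qs_path_shift_recursion labelling_def)
  ultimately show ?thesis
    by (intro exI[of _ Y] conjI allI) simp_all
qed

end
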